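(* Let $\Delta$ be a root system in a Euclidean space $\mathfrak h^*$ and let $\Delta^0\subset\Delta$ be a root subsystem. Then for every $\alpha\in\Delta$: if there exists $\beta\in\Delta\setminus\Delta^0$ with $(\alpha,\beta)\neq0$, then $\alpha\in\mathrm{span}(\Delta\setminus\Delta^0)$. In particular, if $\Delta$ is irreducible and $\Delta^0$ is a proper subsystem, then $\mathrm{span}(\Delta\setminus\Delta^0)=\mathfrak h^*$.
   Context: A root subsystem of $\Delta$ is a subset $\Delta^0\subset\Delta$ which is itself a root system (in its span). Here $\Delta$ spans $\mathfrak h^*$. *)

theory Defs
  imports "HOL-Analysis.Analysis"
begin

definition refl :: "'a::euclidean_space \<Rightarrow> 'a \<Rightarrow> 'a" where
  "refl a b = b - (2 * (b \<bullet> a) / (a \<bullet> a)) *\<^sub>R a"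

text \<open>A (not necessarily reduced) crystallographic root system in its own span:
  finite, not containing 0, stable under the reflections, with integral Cartan numbers.\<close>
definition root_system_in_span :: "'a::euclidean_space set \<Rightarrow> bool" where
  "root_system_in_span R \<longleftrightarrow>
     finite R \<and> 0 \<notin> R \<and>
     (\<forall>a\<in>R. \<forall>b\<in>R. refl a b \<in> R) \<and>
     (\<forall>a\<in>R. \<forall>b\<in>R. 2 * (b \<bullet> a) / (a \<bullet> a) \<in> \<int>)"

definition root_system :: "'a::euclidean_space set \<Rightarrow> bool" where
  "root_system R \<longleftrightarrow> root_system_in_span R \<and> span R = UNIV"

definition root_subsystem :: "'a::euclidean_space set \<Rightarrow> 'a set \<Rightarrow> bool" where
  "root_subsystem R0 R \<longleftrightarrow> R0 \<subseteq> R \<and> root_system_in_span R0"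

definition irreducible_rs :: "'a::euclidean_space set \<Rightarrow> bool" where
  "irreducible_rs R \<longleftrightarrow> R \<noteq> {} \<and>
     \<not> (\<exists>A B. A \<noteq> {} \<and> B \<noteq> {} \<and> A \<union> B = R \<and> A \<inter> B = {} \<and>
              (\<forall>a\<in>A. \<forall>b\<in>B. a \<bullet> b = 0))"

end

theory Submission
  imports Defs
begin

text \<open>If \<open>\<alpha> \<in> \<Delta>\<^sup>0\<close> and \<open>\<beta> \<in> \<Delta> - \<Delta>\<^sup>0\<close>, then \<open>s\<^sub>\<alpha> \<beta> \<in> \<Delta> - \<Delta>\<^sup>0\<close> as well, because \<open>\<Delta>\<^sup>0\<close> is
  stable under the involution \<open>s\<^sub>\<alpha>\<close>. Hence \<open>\<beta> - s\<^sub>\<alpha> \<beta> = \<langle>\<beta>,\<alpha>\<^sup>\<or>\<rangle> \<alpha>\<close> lies in the span of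
  \<open>\<Delta> - \<Delta>\<^sup>0\<close>, and the coefficient is nonzero exactly when \<open>(\<alpha>,\<beta>) \<noteq> 0\<close>. For the second claim,
  the roots outside \<open>span (\<Delta> - \<Delta>\<^sup>0)\<close> are then orthogonal to \<open>\<Delta> - \<Delta>\<^sup>0\<close>, so irreducibility
  forces all roots into that span.\<close>

lemma refl_involutive:
  fixes a b :: "'a::euclidean_space"
  assumes "a \<noteq> 0"
  shows "refl a (refl a b) = b"
proof -
  have aa: "a \<bullet> a \<noteq> 0" using assms by simp
  have "refl a b \<bullet> a = - (b \<bullet> a)"
    using aa by (simp add: refl_def inner_diff_left field_simps)
  then show ?thesis using aa
    by (simp add: refl_def algebra_simps divide_simps)
qed

lemma diff_refl: "b - refl a b = (2 * (b \<bullet> a) / (a \<bullet> a)) *\<^sub>R a"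
  by (simp add: refl_def)

lemma refl_notin_if_refl_closed:
  fixes a b :: "'a::euclidean_space"
  assumes closed: "\<forall>x\<in>R. \<forall>y\<in>R. refl x y \<in> R"
    and "a \<in> R" "a \<noteq> 0" "b \<notin> R"
  shows "refl a b \<notin> R"
proof
  assume "refl a b \<in> R"
  then have "refl a (refl a b) \<in> R" using closed assms(2) by blast
  then show False using assms(3,4) by (simp add: refl_involutive)
qed

lemma root_subsystem_root_in_span_complement:
  fixes \<Delta> \<Delta>0 :: "'a::euclidean_space set"
  assumes "root_system_in_span \<Delta>" "root_subsystem \<Delta>0 \<Delta>"
    and \<alpha>: "\<alpha> \<in> \<Delta>" and \<beta>: "\<beta> \<in> \<Delta> - \<Delta>0" and ne: "\<alpha> \<bullet> \<beta> \<noteq> 0"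
  shows "\<alpha> \<in> span (\<Delta> - \<Delta>0)"
proof (cases "\<alpha> \<in> \<Delta>0")
  case False
  then show ?thesis using \<alpha> by (simp add: span_base)
next
  case True
  have "0 \<notin> \<Delta>" "\<forall>a\<in>\<Delta>. \<forall>b\<in>\<Delta>. refl a b \<in> \<Delta>"
    using assms(1) by (auto simp: root_system_in_span_def)
  moreover have "\<forall>a\<in>\<Delta>0. \<forall>b\<in>\<Delta>0. refl a b \<in> \<Delta>0"
    using assms(2) by (auto simp: root_subsystem_def root_system_in_span_def)
  ultimately have \<alpha>0: "\<alpha> \<noteq> 0" and "refl \<alpha> \<beta> \<in> \<Delta> - \<Delta>0"
    using \<alpha> \<beta> True refl_notin_if_refl_closed[of \<Delta>0 \<alpha> \<beta>] by auto
  define c where "c = 2 * (\<beta> \<bullet> \<alpha>) / (\<alpha> \<bullet> \<alpha>)"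
  have "c *\<^sub>R \<alpha> \<in> span (\<Delta> - \<Delta>0)"
    using \<beta> \<open>refl \<alpha> \<beta> \<in> \<Delta> - \<Delta>0\<close> unfolding c_def diff_refl[symmetric]
    by (intro span_diff span_base) auto
  then have "(1 / c) *\<^sub>R c *\<^sub>R \<alpha> \<in> span (\<Delta> - \<Delta>0)"
    by (rule span_mul)
  moreover have "c \<noteq> 0"
    using ne \<alpha>0 by (simp add: c_def inner_commute)
  ultimately show ?thesis by simp
qed

lemma irreducible_rs_subset_span:
  fixes R X :: "'a::euclidean_space set"
  assumes "irreducible_rs R" "X \<subseteq> R" "X \<noteq> {}"
    and nonorth_in_span: "\<forall>a\<in>R. (\<exists>b\<in>X. a \<bullet> b \<noteq> 0) \<longrightarrow> a \<in> span X"
  shows "R \<subseteq> span X"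
proof -
  have "R \<inter> span X \<noteq> {}"
    using assms(2,3) span_base by blast
  moreover have "\<forall>a\<in>R \<inter> span X. \<forall>b\<in>R - span X. a \<bullet> b = 0"
  proof (intro ballI)
    fix a b assume a: "a \<in> R \<inter> span X" and b: "b \<in> R - span X"
    then have "orthogonal b y" if "y \<in> X" for y
      using nonorth_in_span that by (auto simp: orthogonal_def)
    then have "orthogonal b a"
      using a orthogonal_to_span by blast
    then show "a \<bullet> b = 0" by (simp add: orthogonal_def inner_commute)
  qed
  moreover have "(R \<inter> span X) \<union> (R - span X) = R" "(R \<inter> span X) \<inter> (R - span X) = {}"
    by auto
  ultimately have "R - span X = {}"
    using assms(1) unfolding irreducible_rs_def by metis
  then show ?thesis by blast
qed

theorem lemma3p4:
  fixes \<Delta> \<Delta>0 :: "'a::euclidean_space set"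
  assumes "root_system \<Delta>" and "root_subsystem \<Delta>0 \<Delta>"
  shows "(\<forall>\<alpha>\<in>\<Delta>. (\<exists>\<beta>\<in>\<Delta> - \<Delta>0. \<alpha> \<bullet> \<beta> \<noteq> 0) \<longrightarrow> \<alpha> \<in> span (\<Delta> - \<Delta>0))
     \<and> ((irreducible_rs \<Delta> \<and> \<Delta>0 \<subset> \<Delta>) \<longrightarrow> span (\<Delta> - \<Delta>0) = UNIV)"
proof -
  have rs: "root_system_in_span \<Delta>" and spans: "span \<Delta> = UNIV"
    using assms(1) by (auto simp: root_system_def)
  have nonorth: "\<forall>\<alpha>\<in>\<Delta>. (\<exists>\<beta>\<in>\<Delta> - \<Delta>0. \<alpha> \<bullet> \<beta> \<noteq> 0) \<longrightarrow> \<alpha> \<in> span (\<Delta> - \<Delta>0)"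
    using root_subsystem_root_in_span_complement[OF rs assms(2)] by blast
  moreover have "span (\<Delta> - \<Delta>0) = UNIV" if "irreducible_rs \<Delta>" "\<Delta>0 \<subset> \<Delta>"
  proof -
    have "\<Delta> \<subseteq> span (\<Delta> - \<Delta>0)"
      using irreducible_rs_subset_span[OF that(1) _ _ nonorth] that(2) by blast
    then show ?thesis
      using spans span_minimal[of \<Delta> "span (\<Delta> - \<Delta>0)"] by auto
  qed
  ultimately show ?thesis by blast
qed

end
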